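(* Given a schedule $\sigma$ of $n$ jobs on two machines and $k\ge1$, one run of the randomized $k$-swap algorithm terminates in $O(k\cdot n^{\lceil k/2\rceil}\cdot\log n)$ steps.
   Context: Problem $P2\|C_{\max}$: $n$ jobs with processing times $p_j>0$, two identical machines. A schedule $\sigma=(M_1,M_2)$ partitions the jobs; loads $L_i=\sum_{j\in M_i}p_j$, $\Delta=\max_iL_i-\min_iL_i$; label machines so that machine 1 has maximum load. Randomized $k$-swap algorithm: (1) assign each job independently and uniformly at random to $A$ or $B$; (2) for every $S_1\subseteq A$ with $|S_1|=\lceil k/2\rceil$ put $\sum_{j\in S_1\cap M_1}p_j-\sum_{j\in S_1\cap M_2}p_j$ (with reference to $S_1$) into $A_\Sigma$; (3) for every $S_2\subseteq B$ with $|S_2|=\lfloor k/2\rfloor$ put $\sum_{j\in S_2\cap M_1}p_j-\sum_{j\in S_2\cap M_2}p_j$ into $B_\Sigma$; (4) sort $B_\Sigma$ non-decreasingly; (5) for each $x\in A_\Sigma$ binary-search for $y\in B_\Sigma$ with $-x<y<\Delta-x$; if found, interchange the machine assignments of the jobs of the corresponding $S_1\cup S_2$ and return True; (6) otherwise return False. Steps are elementary operations (including arithmetic and comparisons on processing times) of unit cost. *)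

theory Defs
  imports Complex_Main
begin

text \<open>
Jobs are the indices 0..<n with processing times p j.
A schedule is a predicate sched :: nat => bool (True: job on the first machine
of the given partition, False: on the second). The random choices of step (1)
are given by coins :: nat => bool (True: job goes to A, False: to B).
For every algorithmic component we define its result function and a time
function T_... counting elementary operations (unit cost for arithmetic,
comparisons, list cons, and random access into the (array) B_Sigma), in the
style of "Functional Algorithms, Verified".
\<close>

fun combs :: "nat \<Rightarrow> 'a list \<Rightarrow> 'a list list" where
  "combs 0 xs = [[]]"
| "combs (Suc s) [] = []"
| "combs (Suc s) (x # xs) = map ((#) x) (combs s xs) @ combs (Suc s) xs"

fun T_combs :: "nat \<Rightarrow> 'a list \<Rightarrow> nat" where
  "T_combs 0 xs = 1"
| "T_combs (Suc s) [] = 1"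
| "T_combs (Suc s) (x # xs) =
     T_combs s xs + T_combs (Suc s) xs + 2 * length (combs s xs) + 1"

definition sval :: "(nat \<Rightarrow> bool) \<Rightarrow> (nat \<Rightarrow> real) \<Rightarrow> nat list \<Rightarrow> real" where
  "sval m1 p S = sum_list (map (\<lambda>j. if m1 j then p j else - p j) S)"

definition T_sval :: "nat list \<Rightarrow> nat" where
  "T_sval S = 2 * length S + 1"

definition sigma_list ::
  "(nat \<Rightarrow> bool) \<Rightarrow> (nat \<Rightarrow> real) \<Rightarrow> nat \<Rightarrow> nat list \<Rightarrow> (real \<times> nat list) list" where
  "sigma_list m1 p s xs = map (\<lambda>S. (sval m1 p S, S)) (combs s xs)"

definition T_sigma_list :: "nat \<Rightarrow> nat list \<Rightarrow> nat" where
  "T_sigma_list s xs = T_combs s xs + sum_list (map (\<lambda>S. T_sval S + 1) (combs s xs)) + 1"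

fun merge :: "(real \<times> 'a) list \<Rightarrow> (real \<times> 'a) list \<Rightarrow> (real \<times> 'a) list" where
  "merge [] ys = ys"
| "merge xs [] = xs"
| "merge (x # xs) (y # ys) =
     (if fst x \<le> fst y then x # merge xs (y # ys) else y # merge (x # xs) ys)"

fun T_merge :: "(real \<times> 'a) list \<Rightarrow> (real \<times> 'a) list \<Rightarrow> nat" where
  "T_merge [] ys = 1"
| "T_merge xs [] = 1"
| "T_merge (x # xs) (y # ys) =
     1 + (if fst x \<le> fst y then T_merge xs (y # ys) else T_merge (x # xs) ys)"

function msort :: "(real \<times> 'a) list \<Rightarrow> (real \<times> 'a) list" where
  "msort xs = (if length xs \<le> 1 then xs else
     merge (msort (take (length xs div 2) xs)) (msort (drop (length xs div 2) xs)))"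
  by pat_completeness auto
termination by (relation "measure length") auto

function T_msort :: "(real \<times> 'a) list \<Rightarrow> nat" where
  "T_msort xs = (if length xs \<le> 1 then length xs + 1 else
     T_msort (take (length xs div 2) xs) + T_msort (drop (length xs div 2) xs)
     + T_merge (msort (take (length xs div 2) xs)) (msort (drop (length xs div 2) xs))
     + 2 * length xs + 1)"
  by pat_completeness auto
termination by (relation "measure length") auto

text \<open>Least index i in [lo,hi) with key > t (or hi), for sorted ys.\<close>
function lbound :: "(real \<times> 'a) list \<Rightarrow> real \<Rightarrow> nat \<Rightarrow> nat \<Rightarrow> nat" where
  "lbound ys t lo hi = (if lo < hi then
     (if fst (ys ! ((lo + hi) div 2)) > t then lbound ys t lo ((lo + hi) div 2)
      else lbound ys t (Suc ((lo + hi) div 2)) hi)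
   else lo)"
  by pat_completeness auto
termination by (relation "measure (\<lambda>(ys, t, lo, hi). hi - lo)") auto

function T_lbound :: "(real \<times> 'a) list \<Rightarrow> real \<Rightarrow> nat \<Rightarrow> nat \<Rightarrow> nat" where
  "T_lbound ys t lo hi = (if lo < hi then
     (if fst (ys ! ((lo + hi) div 2)) > t then 1 + T_lbound ys t lo ((lo + hi) div 2)
      else 1 + T_lbound ys t (Suc ((lo + hi) div 2)) hi)
   else 1)"
  by pat_completeness auto
termination by (relation "measure (\<lambda>(ys, t, lo, hi). hi - lo)") auto

definition search :: "real \<Rightarrow> (real \<times> 'a) list \<Rightarrow> real \<Rightarrow> 'a option" where
  "search \<Delta> ys x = (let i = lbound ys (- x) 0 (length ys) in
     if i < length ys \<and> fst (ys ! i) < \<Delta> - x then Some (snd (ys ! i)) else None)"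

definition T_search :: "real \<Rightarrow> (real \<times> 'a) list \<Rightarrow> real \<Rightarrow> nat" where
  "T_search \<Delta> ys x = T_lbound ys (- x) 0 (length ys) + 4"

fun scan :: "real \<Rightarrow> (real \<times> 'a) list \<Rightarrow> (real \<times> 'b) list \<Rightarrow> ('b \<times> 'a) option" where
  "scan \<Delta> ys [] = None"
| "scan \<Delta> ys ((x, S1) # rest) =
     (case search \<Delta> ys x of Some S2 \<Rightarrow> Some (S1, S2) | None \<Rightarrow> scan \<Delta> ys rest)"

fun T_scan :: "real \<Rightarrow> (real \<times> 'a) list \<Rightarrow> (real \<times> 'b) list \<Rightarrow> nat" where
  "T_scan \<Delta> ys [] = 1"
| "T_scan \<Delta> ys ((x, S1) # rest) = T_search \<Delta> ys x + 1 +
     (case search \<Delta> ys x of Some S2 \<Rightarrow> 0 | None \<Rightarrow> T_scan \<Delta> ys rest)"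

definition load_a :: "nat \<Rightarrow> (nat \<Rightarrow> real) \<Rightarrow> (nat \<Rightarrow> bool) \<Rightarrow> real" where
  "load_a n p sched = sum_list (map p (filter sched [0..<n]))"

definition load_b :: "nat \<Rightarrow> (nat \<Rightarrow> real) \<Rightarrow> (nat \<Rightarrow> bool) \<Rightarrow> real" where
  "load_b n p sched = sum_list (map p (filter (\<lambda>j. \<not> sched j) [0..<n]))"

definition mach1 :: "nat \<Rightarrow> (nat \<Rightarrow> real) \<Rightarrow> (nat \<Rightarrow> bool) \<Rightarrow> nat \<Rightarrow> bool" where
  "mach1 n p sched = (if load_a n p sched \<ge> load_b n p sched then sched else (\<lambda>j. \<not> sched j))"

definition delta :: "nat \<Rightarrow> (nat \<Rightarrow> real) \<Rightarrow> (nat \<Rightarrow> bool) \<Rightarrow> real" where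
  "delta n p sched = \<bar>load_a n p sched - load_b n p sched\<bar>"

definition A_sigma :: "nat \<Rightarrow> nat \<Rightarrow> (nat \<Rightarrow> real) \<Rightarrow> (nat \<Rightarrow> bool) \<Rightarrow> (nat \<Rightarrow> bool)
    \<Rightarrow> (real \<times> nat list) list" where
  "A_sigma k n p sched coins =
     sigma_list (mach1 n p sched) p ((k + 1) div 2) (filter coins [0..<n])"

definition B_sigma_unsorted :: "nat \<Rightarrow> nat \<Rightarrow> (nat \<Rightarrow> real) \<Rightarrow> (nat \<Rightarrow> bool) \<Rightarrow> (nat \<Rightarrow> bool)
    \<Rightarrow> (real \<times> nat list) list" where
  "B_sigma_unsorted k n p sched coins =
     sigma_list (mach1 n p sched) p (k div 2) (filter (\<lambda>j. \<not> coins j) [0..<n])"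

definition kswap_run :: "nat \<Rightarrow> nat \<Rightarrow> (nat \<Rightarrow> real) \<Rightarrow> (nat \<Rightarrow> bool) \<Rightarrow> (nat \<Rightarrow> bool)
    \<Rightarrow> bool \<times> (nat \<Rightarrow> bool)" where
  "kswap_run k n p sched coins =
     (case scan (delta n p sched) (msort (B_sigma_unsorted k n p sched coins))
                (A_sigma k n p sched coins) of
        None \<Rightarrow> (False, sched)
      | Some (S1, S2) \<Rightarrow> (True, \<lambda>j. if j \<in> set S1 \<union> set S2 then \<not> sched j else sched j))"

text \<open>Number of elementary steps of one run: loads (2n), labelling and Delta (3),
random assignment (2n), A_Sigma, B_Sigma, sorting, the search loop, and the interchange.\<close>
definition T_kswap_run :: "nat \<Rightarrow> nat \<Rightarrow> (nat \<Rightarrow> real) \<Rightarrow> (nat \<Rightarrow> bool) \<Rightarrow> (nat \<Rightarrow> bool) \<Rightarrow> nat" where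
  "T_kswap_run k n p sched coins =
     2 * n + 3 + 2 * n
     + T_sigma_list ((k + 1) div 2) (filter coins [0..<n])
     + T_sigma_list (k div 2) (filter (\<lambda>j. \<not> coins j) [0..<n])
     + T_msort (B_sigma_unsorted k n p sched coins)
     + T_scan (delta n p sched) (msort (B_sigma_unsorted k n p sched coins))
              (A_sigma k n p sched coins)
     + (case scan (delta n p sched) (msort (B_sigma_unsorted k n p sched coins))
                  (A_sigma k n p sched coins) of
          None \<Rightarrow> 1
        | Some (S1, S2) \<Rightarrow> length S1 + length S2 + 1)"

end

(*
  A_Sigma and B_Sigma have (|A| choose ceil(k/2)) and (|B| choose floor(k/2)) entries, both at most
  n^ceil(k/2), and each entry is produced by combs and summed in O(k) steps. Merge sort of B_Sigma
  costs O(|B_Sigma| log |B_Sigma|), and each of the |A_Sigma| binary searches costs O(log |B_Sigma|);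
  since |B_Sigma| <= n^k, log |B_Sigma| = O(k log n). The enumeration cost is kept linear in k by
  bounding the recursion tree of combs through partial row sums of Pascal's triangle, whose
  terms (m + 1 choose i) are at most 2 m^i.
*)
theory Submission
  imports Defs "HOL-Analysis.Harmonic_Numbers"
begin

lemma length_combs: "length (combs s xs) = length xs choose s"
  by (induction s xs rule: combs.induct) auto

lemma length_mem_combs: "S \<in> set (combs s xs) \<Longrightarrow> length S = s"
  by (induction s xs arbitrary: S rule: combs.induct) auto

lemma binomial_le_power: "(n::nat) choose k \<le> n ^ k"
  by (cases "k \<le> n") (auto simp: binomial_le_pow binomial_eq_0)

lemma binomial_le_power_of_le: "m \<le> n \<Longrightarrow> (m::nat) choose k \<le> n ^ k"
  using binomial_le_power[of m k] power_mono[of m n k] by linarith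

lemma Suc_choose_le_twice_power:
  assumes "1 \<le> m"
  shows "Suc m choose i \<le> 2 * m ^ i"
proof (cases i)
  case (Suc j)
  have "Suc m choose Suc j = (m choose j) + (m choose Suc j)" by simp
  also have "\<dots> \<le> m ^ j + m ^ Suc j" by (intro add_mono binomial_le_power)
  also have "\<dots> \<le> 2 * m ^ Suc j" using assms power_increasing[of j "Suc j" m] by simp
  finally show ?thesis using Suc by simp
qed simp

definition choose_upto :: "nat \<Rightarrow> nat \<Rightarrow> nat" where
  "choose_upto s m = (\<Sum>i\<le>s. m choose i)"

lemma choose_upto_Suc_Suc: "choose_upto (Suc s) (Suc m) = choose_upto s m + choose_upto (Suc s) m"
proof -
  have shift: "choose_upto (Suc s) m' = 1 + (\<Sum>i\<le>s. m' choose Suc i)" for m'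
    unfolding choose_upto_def by (subst sum.atMost_Suc_shift) simp
  have "choose_upto (Suc s) (Suc m) = 1 + (\<Sum>i\<le>s. m choose i) + (\<Sum>i\<le>s. m choose Suc i)"
    by (simp add: shift sum.distrib)
  then show ?thesis using shift[of m] unfolding choose_upto_def[of s m] by linarith
qed

lemma one_le_choose_upto: "1 \<le> choose_upto s m"
  unfolding choose_upto_def using member_le_sum[of 0 "{..s}" "\<lambda>i. m choose i"] by simp

lemma choose_upto_mono: "m \<le> m' \<Longrightarrow> choose_upto s m \<le> choose_upto s m'"
  unfolding choose_upto_def by (intro sum_mono binomial_right_mono)

lemma choose_upto_Suc_le:
  assumes "1 \<le> m"
  shows "choose_upto s (Suc m) \<le> 2 * (s + 1) * m ^ s"
proof -
  have "choose_upto s (Suc m) \<le> (\<Sum>i\<le>s. 2 * m ^ s)"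
    unfolding choose_upto_def
  proof (rule sum_mono)
    fix i assume "i \<in> {..s}"
    then have "m ^ i \<le> m ^ s" using assms by (intro power_increasing) auto
    then show "Suc m choose i \<le> 2 * m ^ s"
      using Suc_choose_le_twice_power[OF assms, of i] by linarith
  qed
  then show ?thesis by simp
qed

(* 2 * choose_upto s (length xs + 1) - 1 bounds the number of calls in the recursion tree;
   the other summand pays for the conses building the result. *)
lemma T_combs_le: "T_combs s xs + 1 \<le> 2 * choose_upto s (Suc (length xs)) + 2 * s * (length xs choose s)"
proof (induction s xs rule: T_combs.induct)
  case (2 s)
  then show ?case using one_le_choose_upto[of "Suc s" 1] by simp
next
  case (3 s x xs)
  then show ?case by (simp add: choose_upto_Suc_Suc length_combs algebra_simps)
qed (simp add: choose_upto_def)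

lemma T_sigma_list_le:
  assumes "length xs \<le> n" "1 \<le> n"
  shows "T_sigma_list s xs \<le> (8 * s + 6) * n ^ s"
proof -
  have C: "length xs choose s \<le> n ^ s" using assms(1) by (rule binomial_le_power_of_le)
  have "(\<Sum>S\<leftarrow>combs s xs. T_sval S + 1) = (\<Sum>S\<leftarrow>combs s xs. 2 * s + 2)"
    by (rule arg_cong[where f = sum_list], rule map_cong) (simp_all add: T_sval_def length_mem_combs)
  then have "T_sigma_list s xs = T_combs s xs + (2 * s + 2) * (length xs choose s) + 1"
    unfolding T_sigma_list_def by (simp add: sum_list_triv length_combs mult.commute)
  also have "\<dots> \<le> 2 * choose_upto s (Suc n) + (4 * s + 2) * (length xs choose s)"
    using T_combs_le[of s xs] choose_upto_mono[of "Suc (length xs)" "Suc n" s] assms(1)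
    by (simp add: algebra_simps)
  also have "\<dots> \<le> 4 * (s + 1) * n ^ s + (4 * s + 2) * n ^ s"
  proof (rule add_mono)
    show "2 * choose_upto s (Suc n) \<le> 4 * (s + 1) * n ^ s"
      using choose_upto_Suc_le[OF assms(2), of s] by (simp add: algebra_simps)
    show "(4 * s + 2) * (length xs choose s) \<le> (4 * s + 2) * n ^ s"
      using C by (rule mult_left_mono) simp
  qed
  also have "\<dots> = (8 * s + 6) * n ^ s" by (simp add: algebra_simps)
  finally show ?thesis .
qed

lemma T_sigma_list_filter_le:
  assumes "s \<le> t" "1 \<le> n"
  shows "T_sigma_list s (filter P [0..<n]) \<le> (8 * t + 6) * n ^ t"
proof -
  have "T_sigma_list s (filter P [0..<n]) \<le> (8 * s + 6) * n ^ s"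
    using assms(2) length_filter_le[of P "[0..<n]"] by (intro T_sigma_list_le) auto
  also have "\<dots> \<le> (8 * t + 6) * n ^ t"
    using assms by (intro mult_le_mono power_increasing) auto
  finally show ?thesis .
qed

declare msort.simps[simp del] T_msort.simps[simp del] lbound.simps[simp del] T_lbound.simps[simp del]

lemma length_merge: "length (merge xs ys) = length xs + length ys"
  by (induction xs ys rule: merge.induct) auto

lemma set_merge: "set (merge xs ys) = set xs \<union> set ys"
  by (induction xs ys rule: merge.induct) auto

lemma T_merge_le: "T_merge xs ys \<le> length xs + length ys + 1"
  by (induction xs ys rule: T_merge.induct) auto

lemma length_msort: "length (msort xs) = length xs"
  by (induction xs rule: msort.induct) (subst msort.simps, simp add: length_merge)

lemma set_msort: "set (msort xs) = set xs"
proof (induction xs rule: msort.induct)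
  case (1 xs)
  let ?h = "length xs div 2"
  show ?case
  proof (cases "length xs \<le> 1")
    case False
    then have "set (msort xs) = set (take ?h xs) \<union> set (drop ?h xs)"
      using 1 by (subst msort.simps) (simp add: set_merge)
    then show ?thesis by (metis append_take_drop_id set_append)
  qed (subst msort.simps, simp)
qed

lemma T_msort_le: "length xs \<le> 2 ^ D \<Longrightarrow> T_msort xs \<le> 5 * length xs * (D + 1) + 2"
proof (induction D arbitrary: xs)
  case 0
  then show ?case by (subst T_msort.simps) simp
next
  case (Suc D)
  let ?L = "length xs"
  let ?a = "take (?L div 2) xs" and ?b = "drop (?L div 2) xs"
  show ?case
  proof (cases "?L \<le> 1")
    case False
    have "T_msort ?a \<le> 5 * (?L div 2) * (D + 1) + 2" "T_msort ?b \<le> 5 * (?L - ?L div 2) * (D + 1) + 2"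
      using Suc.IH[of ?a] Suc.IH[of ?b] Suc.prems by auto
    moreover have "T_merge (msort ?a) (msort ?b) \<le> ?L + 1"
      using T_merge_le[of "msort ?a" "msort ?b"] by (simp add: length_msort)
    moreover have "5 * (?L div 2) * (D + 1) + 5 * (?L - ?L div 2) * (D + 1)
        = 5 * (?L div 2 + (?L - ?L div 2)) * (D + 1)"
      by (simp only: add_mult_distrib add_mult_distrib2)
    moreover have "?L div 2 + (?L - ?L div 2) = ?L" by simp
    ultimately show ?thesis using False by (subst T_msort.simps) simp
  qed (subst T_msort.simps, simp)
qed

lemma T_lbound_le: "hi - lo < 2 ^ D \<Longrightarrow> T_lbound ys t lo hi \<le> D + 1"
proof (induction D arbitrary: lo hi)
  case 0
  then show ?case by (subst T_lbound.simps) simp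
next
  case (Suc D)
  show ?case
  proof (cases "lo < hi")
    case True
    let ?m = "(lo + hi) div 2"
    have "?m - lo < 2 ^ D" "hi - Suc ?m < 2 ^ D" using Suc.prems True by auto
    then have "T_lbound ys t lo ?m \<le> D + 1" "T_lbound ys t (Suc ?m) hi \<le> D + 1"
      using Suc.IH by auto
    then show ?thesis by (subst T_lbound.simps) simp
  qed (subst T_lbound.simps, simp)
qed

lemma T_search_le: "length ys < 2 ^ D \<Longrightarrow> T_search \<Delta> ys x \<le> D + 5"
  using T_lbound_le[of "length ys" 0 D ys "- x"] by (simp add: T_search_def)

lemma T_scan_le: "(\<And>x. T_search \<Delta> ys x \<le> c) \<Longrightarrow> T_scan \<Delta> ys xs \<le> length xs * (c + 1) + 1"
proof (induction \<Delta> ys xs rule: T_scan.induct)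
  case (2 \<Delta> ys x S1 rest)
  have "T_search \<Delta> ys x \<le> c" using 2(2) .
  moreover have "T_scan \<Delta> ys rest \<le> length rest * (c + 1) + 1" if "search \<Delta> ys x = None"
    using 2 that by blast
  ultimately show ?case by (cases "search \<Delta> ys x") simp_all
qed simp

lemma search_SomeD: "search \<Delta> ys x = Some S \<Longrightarrow> \<exists>y. (y, S) \<in> set ys"
  unfolding search_def Let_def by (auto split: if_splits) (metis nth_mem prod.collapse)

lemma scan_SomeD:
  "scan \<Delta> ys xs = Some (S1, S2) \<Longrightarrow> (\<exists>x. (x, S1) \<in> set xs) \<and> (\<exists>y. (y, S2) \<in> set ys)"
  by (induction \<Delta> ys xs rule: scan.induct) (auto split: option.splits dest: search_SomeD)

lemma T_msort_scan_le:
  assumes "length ys \<le> 2 ^ D" "length ys \<le> N" "length xs \<le> N"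
  shows "T_msort ys + T_scan \<Delta> (msort ys) xs \<le> N * (6 * D + 12) + 3"
proof -
  have "T_msort ys \<le> 5 * length ys * (D + 1) + 2" using T_msort_le assms(1) .
  also have "\<dots> \<le> 5 * N * (D + 1) + 2" using assms(2) by (intro add_mono mult_le_mono) simp_all
  finally have sort: "T_msort ys \<le> 5 * N * (D + 1) + 2" .
  have len: "length (msort ys) < 2 ^ Suc D"
    unfolding length_msort power_Suc using assms(1) zero_less_power[of "2::nat" D] by linarith
  have "T_search \<Delta> (msort ys) x \<le> D + 6" for x
    using T_search_le[OF len, of \<Delta> x] by simp
  then have "T_scan \<Delta> (msort ys) xs \<le> length xs * (D + 6 + 1) + 1"
    by (rule T_scan_le)
  also have "\<dots> \<le> N * (D + 6 + 1) + 1" using assms(3) by (intro add_mono mult_le_mono) simp_all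
  finally show ?thesis using sort by (simp add: algebra_simps)
qed

lemma length_A_sigma_le: "length (A_sigma k n p sched coins) \<le> n ^ ((k + 1) div 2)"
  unfolding A_sigma_def sigma_list_def
  by (simp add: length_combs binomial_le_power_of_le length_filter_le[of _ "[0..<n]", simplified])

lemma length_B_sigma_le: "length (B_sigma_unsorted k n p sched coins) \<le> n ^ (k div 2)"
  unfolding B_sigma_unsorted_def sigma_list_def
  by (simp add: length_combs binomial_le_power_of_le length_filter_le[of _ "[0..<n]", simplified])

lemma length_B_sigma_le_two_power:
  assumes "n \<le> 2 ^ d"
  shows "length (B_sigma_unsorted k n p sched coins) \<le> 2 ^ (d * k)"
proof -
  have "length (B_sigma_unsorted k n p sched coins) \<le> (2 ^ d) ^ (k div 2)"
    using length_B_sigma_le power_mono[OF assms] le_trans by blast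
  also have "\<dots> \<le> 2 ^ (d * k)"
    unfolding power_mult[symmetric] by (intro power_increasing) auto
  finally show ?thesis .
qed

lemma length_kswap_swapped:
  assumes "scan \<Delta> (msort (B_sigma_unsorted k n p sched coins)) (A_sigma k n p sched coins) = Some (S1, S2)"
  shows "length S1 + length S2 = k"
proof -
  obtain x y where "(x, S1) \<in> set (A_sigma k n p sched coins)"
    and "(y, S2) \<in> set (B_sigma_unsorted k n p sched coins)"
    using scan_SomeD[OF assms] by (auto simp: set_msort)
  then have "length S1 = (k + 1) div 2" "length S2 = k div 2"
    unfolding A_sigma_def B_sigma_unsorted_def sigma_list_def by (auto dest: length_mem_combs)
  then show ?thesis by simp
qed

lemma T_kswap_run_le:
  assumes "1 \<le> n" "1 \<le> k" "n \<le> 2 ^ d"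
  shows "T_kswap_run k n p sched coins \<le> 60 * k * n ^ ((k + 1) div 2) * (d + 1)"
proof -
  define s where "s = (k + 1) div 2"
  define N where "N = n ^ s"
  define A where "A = A_sigma k n p sched coins"
  define B where "B = B_sigma_unsorted k n p sched coins"
  define \<Delta> where "\<Delta> = delta n p sched"
  have s: "k div 2 \<le> s" "s \<le> k" "1 \<le> s" using assms(2) by (auto simp: s_def)
  have N: "n \<le> N" "n ^ (k div 2) \<le> N"
    unfolding N_def using assms(1) s by (metis power_increasing power_one_right)+
  have "T_sigma_list s (filter coins [0..<n]) + T_sigma_list (k div 2) (filter (\<lambda>j. \<not> coins j) [0..<n])
      \<le> 2 * ((8 * s + 6) * N)"
    unfolding N_def mult_2
    using s assms(1) by (intro add_mono T_sigma_list_filter_le) auto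
  also have "\<dots> \<le> 28 * k * N" using s by simp
  finally have sigma: "T_sigma_list s (filter coins [0..<n])
      + T_sigma_list (k div 2) (filter (\<lambda>j. \<not> coins j) [0..<n]) \<le> 28 * k * N" .
  have "T_msort B + T_scan \<Delta> (msort B) A \<le> N * (6 * (d * k) + 12) + 3"
  proof (rule T_msort_scan_le)
    show "length B \<le> 2 ^ (d * k)" unfolding B_def using assms(3) by (rule length_B_sigma_le_two_power)
    show "length B \<le> N" unfolding B_def using le_trans[OF length_B_sigma_le N(2)] .
    show "length A \<le> N" unfolding A_def N_def s_def by (rule length_A_sigma_le)
  qed
  moreover have "(case scan \<Delta> (msort B) A of
      None \<Rightarrow> 1 | Some (S1, S2) \<Rightarrow> length S1 + length S2 + 1) \<le> k + 1"
    unfolding A_def B_def by (auto split: option.split dest: length_kswap_swapped)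
  ultimately have "T_kswap_run k n p sched coins \<le> 4 * N + 28 * k * N + N * (6 * (d * k) + 12) + k + 7"
    using sigma N unfolding T_kswap_run_def A_def B_def \<Delta>_def s_def by simp
  also have "\<dots> \<le> 60 * k * N * (d + 1)"
  proof -
    have kN: "N \<le> k * N" "k \<le> k * N" "1 \<le> k * N" using assms(1,2) N(1) by simp_all
    have "4 * N + 28 * k * N + N * (6 * (d * k) + 12) + k + 7
        = 16 * N + 28 * (k * N) + 6 * (d * (k * N)) + k + 7"
      by (simp add: algebra_simps)
    also have "\<dots> \<le> 60 * (k * N) + 60 * (d * (k * N))"
      using kN by linarith
    also have "\<dots> = 60 * k * N * (d + 1)" by (simp add: algebra_simps)
    finally show ?thesis .
  qed
  finally show ?thesis unfolding N_def s_def .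
qed

lemma nat_ceiling_half: "nat \<lceil>real k / 2\<rceil> = (k + 1) div 2"
proof (cases "even k")
  case False
  then obtain q where q: "k = 2 * q + 1" using oddE by blast
  have "\<lceil>real k / 2\<rceil> = int q + 1" unfolding q by (intro ceiling_unique) auto
  then show ?thesis using q by simp
qed auto

lemma exponent_of_two_le_ln:
  assumes "2 \<le> n"
  obtains d :: nat where "n \<le> 2 ^ d" "real d + 1 \<le> 5 * ln (real n)"
proof
  define d where "d = nat \<lceil>log 2 (real n)\<rceil>"
  have log_ge_1: "1 \<le> log 2 (real n)" using assms by simp
  have "real n = 2 powr log 2 (real n)" using assms by simp
  also have "\<dots> \<le> 2 powr real d" unfolding d_def by (intro powr_mono real_nat_ceiling_ge) simp
  finally show "n \<le> 2 ^ d" by (simp add: powr_realpow flip: of_nat_le_iff)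
  have "real d + 1 \<le> 3 * log 2 (real n)" unfolding d_def using log_ge_1 by linarith
  also have "\<dots> = 3 * ln (real n) / ln 2" by (simp add: log_def)
  also have "\<dots> \<le> 3 * ln (real n) / (2 / 3)"
    using assms ln2_ge_two_thirds by (intro divide_left_mono) auto
  also have "\<dots> \<le> 5 * ln (real n)" using assms by simp
  finally show "real d + 1 \<le> 5 * ln (real n)" .
qed

theorem lemma2:
  shows "\<exists>C > 0. \<forall>n \<ge> 2. \<forall>k \<ge> 1. \<forall>(p :: nat \<Rightarrow> real) (sched :: nat \<Rightarrow> bool) (coins :: nat \<Rightarrow> bool).
           (\<forall>j < n. p j > 0) \<longrightarrow>
           real (T_kswap_run k n p sched coins)
             \<le> C * real k * real n ^ nat \<lceil>real k / 2\<rceil> * ln (real n)"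
proof (intro exI[of _ 300] conjI allI impI)
  fix n k :: nat and p :: "nat \<Rightarrow> real" and sched coins :: "nat \<Rightarrow> bool"
  \<comment> \<open>The bound holds for arbitrary processing times.\<close>
  assume "n \<ge> 2" and "k \<ge> 1"
  then obtain d where "n \<le> 2 ^ d" and d: "real d + 1 \<le> 5 * ln (real n)"
    using exponent_of_two_le_ln by blast
  then have "T_kswap_run k n p sched coins \<le> 60 * k * n ^ ((k + 1) div 2) * (d + 1)"
    using \<open>n \<ge> 2\<close> \<open>k \<ge> 1\<close> by (intro T_kswap_run_le) auto
  then have "real (T_kswap_run k n p sched coins) \<le> real (60 * k * n ^ ((k + 1) div 2) * (d + 1))"
    by (rule of_nat_mono)
  also have "\<dots> = 60 * real k * real n ^ ((k + 1) div 2) * (real d + 1)" by (simp add: algebra_simps)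
  also have "\<dots> \<le> 60 * real k * real n ^ ((k + 1) div 2) * (5 * ln (real n))"
    using d by (intro mult_left_mono) auto
  finally show "real (T_kswap_run k n p sched coins)
      \<le> 300 * real k * real n ^ nat \<lceil>real k / 2\<rceil> * ln (real n)"
    by (simp add: nat_ceiling_half)
qed simp

end
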